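(* Let $I=[a,b]$ with $|I|<1$, $\gamma>0$, and $\mathcal{K}\in\mathrm{D}^{1+\mathcal{Z}_\gamma}(I)$. For $x\in I$ let $z=\frac{b-x}{b-a}$. Then there is a constant $C>0$ such that for all $x\in I$ $$|z\mathcal{K}'(a)+(1-z)\mathcal{K}'(b)-\mathcal{K}'(x)|\le\begin{cases}C|I|\,T_\gamma(z,|I|), & z\in[0,\frac12],\\ C|I|\,T_\gamma(1-z,|I|), & z\in(\frac12,1].\end{cases}$$
   Context: $\mathcal{Z}_\gamma(x)=(\log\frac1x)^{-\gamma}$ for $x\in(0,1)$, $\mathcal{Z}_\gamma(0)=0$. $\mathrm{D}^{1+\mathcal{Z}_\gamma}(I)$ is the class of $C^1$ diffeomorphisms $\mathcal{K}$ of $I$ onto its image whose derivative satisfies: there is $C_0>0$ with $|\mathcal{K}'(\xi+\tau)+\mathcal{K}'(\xi-\tau)-2\mathcal{K}'(\xi)|\le C_0\tau\mathcal{Z}_\gamma(\tau)$ for all $\tau\in[0,|I|/2]$ and all $\xi$ with $\xi\pm\tau\in I$. $T_\gamma:[0,\frac12]\times(0,1)\to\mathbb{R}$ is defined by $T_\gamma(s,t)=s\int_s^1\frac{\mathcal{Z}_\gamma(xt)}{x}dx+\int_0^s\mathcal{Z}_\gamma(xt)dx$ for $s\in(0,\frac12]$ and $T_\gamma(0,t)=0$. *)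

theory Defs
  imports "HOL-Analysis.Analysis"
begin

text \<open>The modulus Z_gamma(x) = (log(1/x))^(-gamma) on (0,1), Z_gamma(0) = 0
  (values outside [0,1) are never used).\<close>
definition Zg :: "real \<Rightarrow> real \<Rightarrow> real" where
  "Zg \<gamma> x = (if 0 < x \<and> x < 1 then (ln (1 / x)) powr (- \<gamma>) else 0)"

definition C1_diffeo_on :: "real \<Rightarrow> real \<Rightarrow> (real \<Rightarrow> real) \<Rightarrow> (real \<Rightarrow> real) \<Rightarrow> bool" where
  "C1_diffeo_on a b K K' \<longleftrightarrow>
     (\<forall>x\<in>{a..b}. (K has_real_derivative K' x) (at x within {a..b})) \<and>
     continuous_on {a..b} K' \<and>
     (\<forall>x\<in>{a..b}. K' x \<noteq> 0) \<and>
     inj_on K {a..b}"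

definition D1Z :: "real \<Rightarrow> real \<Rightarrow> real \<Rightarrow> (real \<Rightarrow> real) \<Rightarrow> (real \<Rightarrow> real) \<Rightarrow> bool" where
  "D1Z \<gamma> a b K K' \<longleftrightarrow>
     C1_diffeo_on a b K K' \<and>
     (\<exists>C0>0. \<forall>\<tau> \<xi>. 0 \<le> \<tau> \<and> \<tau> \<le> (b - a) / 2 \<and> \<xi> - \<tau> \<in> {a..b} \<and> \<xi> + \<tau> \<in> {a..b} \<longrightarrow>
        \<bar>K' (\<xi> + \<tau>) + K' (\<xi> - \<tau>) - 2 * K' \<xi>\<bar> \<le> C0 * \<tau> * Zg \<gamma> \<tau>)"

definition Tg :: "real \<Rightarrow> real \<Rightarrow> real \<Rightarrow> real" where
  "Tg \<gamma> s t = (if s = 0 then 0 else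
      s * integral {s..1} (\<lambda>x. Zg \<gamma> (x * t) / x) + integral {0..s} (\<lambda>x. Zg \<gamma> (x * t)))"

end

theory Submission
  imports Defs
begin

text \<open>Subtracting the chord of \<open>K'\<close> leaves a function \<open>r\<close> vanishing at both endpoints with the
  same second-difference bound. At the dyadic points \<open>G u = r (a + u |I|)\<close> the quantity
  \<open>G (2u) - 2 G u\<close> is a second difference, so \<open>|G u| \<le> |G (2u)| / 2 + O(u Z(u|I|))\<close>.
  Iterating from scale \<open>1\<close> down to \<open>u\<close> gives \<open>|G u| \<lesssim> u \<Sum>\<^sub>k Z(2\<^sup>k u|I|)\<close>, and this sum is
  dominated by \<open>u \<integral>\<^sub>u\<^sup>1 Z(x|I|)/x dx \<le> T(u,|I|)\<close>. The other endpoint follows by reflection.\<close>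

definition Zygmund_on :: "real \<Rightarrow> real \<Rightarrow> real \<Rightarrow> (real \<Rightarrow> real) \<Rightarrow> bool" where
  "Zygmund_on \<gamma> a b f \<longleftrightarrow>
     (\<exists>C0>0. \<forall>\<tau> \<xi>. 0 \<le> \<tau> \<and> \<tau> \<le> (b - a) / 2 \<and> \<xi> - \<tau> \<in> {a..b} \<and> \<xi> + \<tau> \<in> {a..b} \<longrightarrow>
        \<bar>f (\<xi> + \<tau>) + f (\<xi> - \<tau>) - 2 * f \<xi>\<bar> \<le> C0 * \<tau> * Zg \<gamma> \<tau>)"

lemma D1Z_iff: "D1Z \<gamma> a b K K' \<longleftrightarrow> C1_diffeo_on a b K K' \<and> Zygmund_on \<gamma> a b K'"
  by (simp add: D1Z_def Zygmund_on_def)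

lemma Zygmund_on_diff_affine:
  assumes "Zygmund_on \<gamma> a b f"
  shows "Zygmund_on \<gamma> a b (\<lambda>x. f x - (c * x + d))"
  using assms unfolding Zygmund_on_def by (simp add: algebra_simps)

lemma Zygmund_on_reflect:
  assumes "Zygmund_on \<gamma> a b f"
  shows "Zygmund_on \<gamma> a b (\<lambda>x. f (a + b - x))"
proof -
  obtain C0 where "C0 > 0" and C0: "\<And>\<tau> \<xi>. 0 \<le> \<tau> \<Longrightarrow> \<tau> \<le> (b - a) / 2 \<Longrightarrow> \<xi> - \<tau> \<in> {a..b} \<Longrightarrow>
      \<xi> + \<tau> \<in> {a..b} \<Longrightarrow> \<bar>f (\<xi> + \<tau>) + f (\<xi> - \<tau>) - 2 * f \<xi>\<bar> \<le> C0 * \<tau> * Zg \<gamma> \<tau>"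
    using assms unfolding Zygmund_on_def by blast
  have "\<bar>f (a + b - (\<xi> + \<tau>)) + f (a + b - (\<xi> - \<tau>)) - 2 * f (a + b - \<xi>)\<bar> \<le> C0 * \<tau> * Zg \<gamma> \<tau>"
    if "0 \<le> \<tau>" "\<tau> \<le> (b - a) / 2" "\<xi> - \<tau> \<in> {a..b}" "\<xi> + \<tau> \<in> {a..b}" for \<tau> \<xi>
    using C0[of \<tau> "a + b - \<xi>"] that by (simp add: algebra_simps)
  with \<open>C0 > 0\<close> show ?thesis unfolding Zygmund_on_def by blast
qed

lemma continuous_on_reflect_interval:
  fixes a b :: real and f :: "real \<Rightarrow> 'a::topological_space"
  assumes "continuous_on {a..b} f"
  shows "continuous_on {a..b} (\<lambda>x. f (a + b - x))"
  by (rule continuous_on_compose2[OF assms continuous_on_op_minus]) auto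

lemma Zg_nonneg: "0 \<le> Zg \<gamma> x"
  by (simp add: Zg_def)

lemma Zg_pos: "0 < x \<Longrightarrow> x < 1 \<Longrightarrow> 0 < Zg \<gamma> x"
  by (simp add: Zg_def)

lemma Zg_mono:
  assumes "0 < \<gamma>" "0 \<le> s" "s \<le> t" "t < 1"
  shows "Zg \<gamma> s \<le> Zg \<gamma> t"
proof (cases "s = 0")
  case True
  then show ?thesis by (simp add: Zg_def)
next
  case False
  with assms have "0 < s" "0 < t" by auto
  with assms have "0 < ln (1 / t)" "ln (1 / t) \<le> ln (1 / s)" by (auto simp: ln_div)
  with assms have "ln (1 / s) powr (- \<gamma>) \<le> ln (1 / t) powr (- \<gamma>)"
    by (intro powr_mono2') auto
  with \<open>0 < s\<close> \<open>0 < t\<close> assms show ?thesis by (simp add: Zg_def)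
qed

lemma continuous_on_Zg_scaled_div:
  assumes "0 < u" "0 < h" "h < 1"
  shows "continuous_on {u..1} (\<lambda>x. Zg \<gamma> (x * h) / x)"
proof -
  have xh: "0 < x * h \<and> x * h < 1" if "x \<in> {u..1}" for x
  proof -
    have "x * h \<le> 1 * h" using that assms by (intro mult_right_mono) auto
    moreover have "0 < x * h" using that assms by simp
    ultimately show ?thesis using assms by linarith
  qed
  have "continuous_on {u..1} (\<lambda>x. ln (1 / (x * h)) powr (- \<gamma>) / x)"
    using xh assms by (intro continuous_intros) (auto, fastforce+)
  moreover have "Zg \<gamma> (x * h) / x = ln (1 / (x * h)) powr (- \<gamma>) / x" if "x \<in> {u..1}" for x
    using xh[OF that] by (simp add: Zg_def)
  ultimately show ?thesis by (metis (no_types, lifting) continuous_on_cong)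
qed

definition Zg_tail :: "real \<Rightarrow> real \<Rightarrow> real \<Rightarrow> real" where
  "Zg_tail \<gamma> h u = integral {u..1} (\<lambda>x. Zg \<gamma> (x * h) / x)"

lemma integral_Zg_scaled_div_nonneg:
  assumes "0 < h"
  shows "0 \<le> integral {p..q} (\<lambda>x. Zg \<gamma> (x * h) / x)"
proof (cases "(\<lambda>x. Zg \<gamma> (x * h) / x) integrable_on {p..q}")
  case True
  have "0 \<le> Zg \<gamma> (x * h) / x" for x
    using assms by (cases "0 < x") (auto simp: Zg_nonneg Zg_def zero_less_mult_iff)
  with True show ?thesis by (intro integral_nonneg) auto
qed (simp add: not_integrable_integral)

lemma Zg_tail_nonneg: "0 < h \<Longrightarrow> 0 \<le> Zg_tail \<gamma> h u"
  unfolding Zg_tail_def by (rule integral_Zg_scaled_div_nonneg)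

lemma Zg_tail_split:
  assumes "0 < u" "u \<le> v" "v \<le> 1" "0 < h" "h < 1"
  shows "Zg_tail \<gamma> h u = integral {u..v} (\<lambda>x. Zg \<gamma> (x * h) / x) + Zg_tail \<gamma> h v"
  unfolding Zg_tail_def
  using Henstock_Kurzweil_Integration.integral_combine[OF assms(2,3)
      integrable_continuous_interval[OF continuous_on_Zg_scaled_div[OF assms(1,4,5)]]]
  by simp

lemma Zg_tail_antimono:
  assumes "0 < u" "u \<le> v" "v \<le> 1" "0 < h" "h < 1"
  shows "Zg_tail \<gamma> h v \<le> Zg_tail \<gamma> h u"
  using Zg_tail_split[OF assms] integral_Zg_scaled_div_nonneg[OF assms(4)] by simp

lemma Zg_tail_doubling:
  assumes "0 < \<gamma>" "0 < u" "u \<le> 1/2" "0 < h" "h < 1"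
  shows "Zg_tail \<gamma> h (2 * u) + Zg \<gamma> (u * h) / 2 \<le> Zg_tail \<gamma> h u"
proof -
  have integrable: "(\<lambda>x. Zg \<gamma> (x * h) / x) integrable_on {u..2 * u}"
    using integrable_continuous_interval[OF continuous_on_Zg_scaled_div[OF assms(2,4,5)]]
    by (rule integrable_subinterval_real) (use assms in auto)
  have "Zg \<gamma> (u * h) / (2 * u) \<le> Zg \<gamma> (x * h) / x" if "x \<in> {u..2 * u}" for x
  proof -
    have "x * h \<le> 1 * h" using that assms by (intro mult_right_mono) auto
    then have "x * h < 1" using assms by linarith
    moreover have "u * h \<le> x * h" using that assms by (intro mult_right_mono) auto
    ultimately have "Zg \<gamma> (u * h) \<le> Zg \<gamma> (x * h)" using assms by (intro Zg_mono) auto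
    then show ?thesis using that assms by (intro frac_le) (auto simp: Zg_nonneg)
  qed
  then have "integral {u..2 * u} (\<lambda>x. Zg \<gamma> (u * h) / (2 * u))
      \<le> integral {u..2 * u} (\<lambda>x. Zg \<gamma> (x * h) / x)"
    by (intro integral_le[OF integrable_const_ivl integrable])
  moreover have "integral {u..2 * u} (\<lambda>x. Zg \<gamma> (u * h) / (2 * u)) = Zg \<gamma> (u * h) / 2"
    using assms by (simp add: integral_const_real)
  ultimately show ?thesis using Zg_tail_split[of u "2 * u" h \<gamma>] assms by simp
qed

lemma Zg_tail_half_pos:
  assumes "0 < \<gamma>" "0 < h" "h < 1"
  shows "0 < Zg_tail \<gamma> h (1/2)"
proof -
  have "Zg_tail \<gamma> h 1 + Zg \<gamma> (h / 2) / 2 \<le> Zg_tail \<gamma> h (1/2)"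
    using Zg_tail_doubling[of \<gamma> "1/2" h] assms by simp
  moreover have "0 < Zg \<gamma> (h / 2)" using assms by (intro Zg_pos) auto
  ultimately show ?thesis using Zg_tail_nonneg[OF assms(2), of \<gamma> 1] by linarith
qed

lemma Tg_ge_Zg_tail:
  assumes "0 < z" "0 < h"
  shows "z * Zg_tail \<gamma> h z \<le> Tg \<gamma> z h"
proof -
  have "0 \<le> integral {0..z} (\<lambda>x. Zg \<gamma> (x * h))"
  proof (cases "(\<lambda>x. Zg \<gamma> (x * h)) integrable_on {0..z}")
    case True
    then show ?thesis by (rule integral_nonneg) (simp add: Zg_nonneg)
  qed (simp add: not_integrable_integral)
  then show ?thesis using assms by (simp add: Tg_def Zg_tail_def)
qed

lemma Tg_nonneg:
  assumes "0 \<le> z" "0 < h"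
  shows "0 \<le> Tg \<gamma> z h"
proof (cases "z = 0")
  case False
  with assms have "0 \<le> z * Zg_tail \<gamma> h z" by (simp add: Zg_tail_nonneg)
  with False assms Tg_ge_Zg_tail[of z h \<gamma>] show ?thesis by linarith
qed (simp add: Tg_def)

text \<open>The weight \<open>w\<close> lost at each halving of \<open>u\<close> is absorbed by the decrease of \<open>F\<close>.\<close>

lemma dyadic_doubling_bound:
  fixes G F w :: "real \<Rightarrow> real"
  assumes "0 \<le> D"
    and top: "\<And>u. 1/2 < u \<Longrightarrow> u \<le> 1 \<Longrightarrow> \<bar>G u\<bar> \<le> A * u + D * u * F u"
    and step: "\<And>u. 0 < u \<Longrightarrow> u \<le> 1/2 \<Longrightarrow> \<bar>G (2 * u) - 2 * G u\<bar> \<le> D * u * w u"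
    and F_step: "\<And>u. 0 < u \<Longrightarrow> u \<le> 1/2 \<Longrightarrow> F (2 * u) + w u / 2 \<le> F u"
    and "0 < u" "u \<le> 1"
  shows "\<bar>G u\<bar> \<le> A * u + D * u * F u"
proof -
  have "\<bar>G u\<bar> \<le> A * u + D * u * F u" if "(1/2) ^ n < u" "u \<le> 1" for n u
    using that
  proof (induction n arbitrary: u)
    case (Suc n)
    show ?case
    proof (cases "1/2 < u")
      case False
      have "0 < u" using Suc.prems(1) zero_less_power[of "1/2::real" "Suc n"] by linarith
      have IH: "\<bar>G (2 * u)\<bar> \<le> A * (2 * u) + D * (2 * u) * F (2 * u)"
        using Suc False by (intro Suc.IH) auto
      have "D * u * (F (2 * u) + w u / 2) \<le> D * u * F u"
        using F_step[OF \<open>0 < u\<close>] False \<open>0 \<le> D\<close> \<open>0 < u\<close> by (intro mult_left_mono) auto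
      with IH step[OF \<open>0 < u\<close>] False have "2 * \<bar>G u\<bar> \<le> 2 * (A * u + D * u * F u)"
        by (simp add: algebra_simps)
      then show ?thesis by simp
    qed (use Suc.prems top in auto)
  qed simp
  moreover obtain n where "(1/2::real) ^ n < u"
    using real_arch_pow_inv[of u "1/2"] \<open>0 < u\<close> by auto
  ultimately show ?thesis using \<open>u \<le> 1\<close> by blast
qed

lemma Zg_tail_bound_from_doubling:
  fixes G :: "real \<Rightarrow> real"
  assumes "0 < \<gamma>" "0 < h" "h < 1" "continuous_on {0..1} G" "0 < D"
    and step: "\<And>u. 0 < u \<Longrightarrow> u \<le> 1/2 \<Longrightarrow> \<bar>G (2 * u) - 2 * G u\<bar> \<le> D * u * Zg \<gamma> (u * h)"
  shows "\<exists>C>0. \<forall>u. 0 < u \<and> u \<le> 1/2 \<longrightarrow> \<bar>G u\<bar> \<le> C * u * Zg_tail \<gamma> h u"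
proof -
  obtain M where M: "\<forall>u\<in>{0..1}. \<bar>G u\<bar> \<le> M"
    using compact_imp_bounded[OF compact_continuous_image[OF assms(4) compact_Icc]]
    unfolding bounded_iff by auto
  define A where "A = 2 * \<bar>M\<bar>"
  define c where "c = Zg_tail \<gamma> h (1/2)"
  have "0 < c" using Zg_tail_half_pos[OF assms(1-3)] unfolding c_def .
  have top: "\<bar>G u\<bar> \<le> A * u + D * u * Zg_tail \<gamma> h u" if "1/2 < u" "u \<le> 1" for u
  proof -
    have "\<bar>M\<bar> * 1 \<le> \<bar>M\<bar> * (2 * u)" using that by (intro mult_left_mono) auto
    moreover have "0 \<le> D * u * Zg_tail \<gamma> h u"
      using that \<open>0 < D\<close> Zg_tail_nonneg[OF \<open>0 < h\<close>] by simp
    moreover have "\<bar>G u\<bar> \<le> M" using M that by auto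
    ultimately show ?thesis unfolding A_def by linarith
  qed
  show ?thesis
  proof (intro exI[of _ "A / c + D"] conjI allI impI)
    show "0 < A / c + D"
      using \<open>0 < c\<close> \<open>0 < D\<close> unfolding A_def by (simp add: add_nonneg_pos)
  next
    fix u :: real
    assume u: "0 < u \<and> u \<le> 1/2"
    have "\<bar>G u\<bar> \<le> A * u + D * u * Zg_tail \<gamma> h u"
      using Zg_tail_doubling[OF \<open>0 < \<gamma>\<close> _ _ \<open>0 < h\<close> \<open>h < 1\<close>] u
      by (intro dyadic_doubling_bound[OF less_imp_le[OF \<open>0 < D\<close>] top step]) auto
    moreover have "A * u = A / c * u * c" using \<open>0 < c\<close> by simp
    moreover have "A / c * u * c \<le> A / c * u * Zg_tail \<gamma> h u"
      using Zg_tail_antimono[of u "1/2" h \<gamma>] u assms \<open>0 < c\<close>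
      by (intro mult_left_mono) (auto simp: c_def A_def)
    moreover have "(A / c + D) * u * Zg_tail \<gamma> h u = A / c * u * Zg_tail \<gamma> h u + D * u * Zg_tail \<gamma> h u"
      by (simp add: distrib_right)
    ultimately show "\<bar>G u\<bar> \<le> (A / c + D) * u * Zg_tail \<gamma> h u" by linarith
  qed
qed

lemma Zygmund_on_endpoint_bound:
  assumes "0 < \<gamma>" "a < b" "b - a < 1" "continuous_on {a..b} f" "f a = 0" "Zygmund_on \<gamma> a b f"
  shows "\<exists>C>0. \<forall>u. 0 \<le> u \<and> u \<le> 1/2 \<longrightarrow> \<bar>f (a + u * (b - a))\<bar> \<le> C * Tg \<gamma> u (b - a)"
proof -
  define h where "h = b - a"
  have "0 < h" "h < 1" using assms unfolding h_def by auto
  obtain C0 where "C0 > 0" and C0: "\<And>\<tau> \<xi>. 0 \<le> \<tau> \<Longrightarrow> \<tau> \<le> h / 2 \<Longrightarrow> \<xi> - \<tau> \<in> {a..b} \<Longrightarrow>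
      \<xi> + \<tau> \<in> {a..b} \<Longrightarrow> \<bar>f (\<xi> + \<tau>) + f (\<xi> - \<tau>) - 2 * f \<xi>\<bar> \<le> C0 * \<tau> * Zg \<gamma> \<tau>"
    using assms(6) unfolding Zygmund_on_def h_def by blast
  have "continuous_on {0..1} (\<lambda>u. f (a + u * h))"
  proof (rule continuous_on_compose2[OF assms(4)])
    have "a + u * h \<in> {a..b}" if "u \<in> {0..1}" for u
    proof -
      have "u * h \<le> h" "0 \<le> u * h" using that \<open>0 < h\<close> by (auto intro: mult_left_le_one_le)
      then show ?thesis unfolding atLeastAtMost_iff using h_def by linarith
    qed
    then show "(\<lambda>u. a + u * h) ` {0..1} \<subseteq> {a..b}" by auto
  qed (auto intro!: continuous_intros)
  moreover have "\<bar>f (a + 2 * u * h) - 2 * f (a + u * h)\<bar> \<le> C0 * h * u * Zg \<gamma> (u * h)"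
    if "0 < u" "u \<le> 1/2" for u
  proof -
    define \<tau> where "\<tau> = u * h"
    have "0 \<le> \<tau>" "\<tau> \<le> h / 2" using that \<open>0 < h\<close> unfolding \<tau>_def by simp_all
    moreover have "(a + \<tau>) - \<tau> \<in> {a..b}" "(a + \<tau>) + \<tau> \<in> {a..b}"
      using calculation h_def by auto
    ultimately have "\<bar>f ((a + \<tau>) + \<tau>) + f ((a + \<tau>) - \<tau>) - 2 * f (a + \<tau>)\<bar> \<le> C0 * \<tau> * Zg \<gamma> \<tau>"
      by (rule C0)
    then show ?thesis using \<open>f a = 0\<close> unfolding \<tau>_def by (simp add: algebra_simps)
  qed
  ultimately obtain C where "C > 0"
    and C: "\<And>u. 0 < u \<Longrightarrow> u \<le> 1/2 \<Longrightarrow> \<bar>f (a + u * h)\<bar> \<le> C * u * Zg_tail \<gamma> h u"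
    using Zg_tail_bound_from_doubling[OF \<open>0 < \<gamma>\<close> \<open>0 < h\<close> \<open>h < 1\<close>, of "\<lambda>u. f (a + u * h)" "C0 * h"]
      \<open>C0 > 0\<close> \<open>0 < h\<close> by (auto simp: mult.assoc)
  have "\<bar>f (a + u * h)\<bar> \<le> C * Tg \<gamma> u h" if "0 \<le> u" "u \<le> 1/2" for u
  proof (cases "u = 0")
    case False
    with that have "C * (u * Zg_tail \<gamma> h u) \<le> C * Tg \<gamma> u h"
      using Tg_ge_Zg_tail \<open>0 < h\<close> \<open>C > 0\<close> by (intro mult_left_mono) auto
    with C[of u] False that show ?thesis by (simp add: mult.assoc)
  qed (simp add: \<open>f a = 0\<close> Tg_def)
  with \<open>C > 0\<close> show ?thesis unfolding h_def by blast
qed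

lemma Zygmund_on_vanishing_endpoints_bound:
  assumes "0 < \<gamma>" "a < b" "b - a < 1" "continuous_on {a..b} f" "f a = 0" "f b = 0"
    and "Zygmund_on \<gamma> a b f"
  shows "\<exists>C>0. \<forall>u. 0 \<le> u \<and> u \<le> 1/2 \<longrightarrow>
    \<bar>f (a + u * (b - a))\<bar> \<le> C * Tg \<gamma> u (b - a) \<and> \<bar>f (b - u * (b - a))\<bar> \<le> C * Tg \<gamma> u (b - a)"
proof -
  obtain C1 where "C1 > 0"
    and C1: "\<And>u. 0 \<le> u \<Longrightarrow> u \<le> 1/2 \<Longrightarrow> \<bar>f (a + u * (b - a))\<bar> \<le> C1 * Tg \<gamma> u (b - a)"
    using Zygmund_on_endpoint_bound[OF assms(1-5,7)] by blast
  obtain C2 where "C2 > 0"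
    and C2: "\<And>u. 0 \<le> u \<Longrightarrow> u \<le> 1/2 \<Longrightarrow> \<bar>f (b - u * (b - a))\<bar> \<le> C2 * Tg \<gamma> u (b - a)"
    using Zygmund_on_endpoint_bound[OF assms(1-3) continuous_on_reflect_interval[OF assms(4)] _
        Zygmund_on_reflect[OF assms(7)]] \<open>f b = 0\<close> by (auto simp: algebra_simps)
  have "\<bar>f (a + u * (b - a))\<bar> \<le> (C1 + C2) * Tg \<gamma> u (b - a)
      \<and> \<bar>f (b - u * (b - a))\<bar> \<le> (C1 + C2) * Tg \<gamma> u (b - a)" if "0 \<le> u" "u \<le> 1/2" for u
  proof -
    have "0 \<le> Tg \<gamma> u (b - a)" using that assms by (intro Tg_nonneg) auto
    then have "C1 * Tg \<gamma> u (b - a) \<le> (C1 + C2) * Tg \<gamma> u (b - a)"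
      "C2 * Tg \<gamma> u (b - a) \<le> (C1 + C2) * Tg \<gamma> u (b - a)"
      using \<open>C1 > 0\<close> \<open>C2 > 0\<close> by (simp_all add: mult_right_mono)
    with C1[OF that] C2[OF that] show ?thesis by linarith
  qed
  with \<open>C1 > 0\<close> \<open>C2 > 0\<close> show ?thesis by (intro exI[of _ "C1 + C2"]) auto
qed

theorem lemma2p7:
  fixes a b \<gamma> :: real and K K' :: "real \<Rightarrow> real"
  assumes "a < b" and "b - a < 1" and "\<gamma> > 0"
    and "D1Z \<gamma> a b K K'"
  shows "\<exists>C>0. \<forall>x\<in>{a..b}.
    (let z = (b - x) / (b - a) in
      \<bar>z * K' a + (1 - z) * K' b - K' x\<bar>
        \<le> (if z \<le> 1/2 then C * (b - a) * Tg \<gamma> z (b - a)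
            else C * (b - a) * Tg \<gamma> (1 - z) (b - a)))"
proof -
  define h where "h = b - a"
  have "0 < h" using assms unfolding h_def by simp
  define r where "r x = K' x - ((b - x) / h * K' a + (1 - (b - x) / h) * K' b)" for x
  have r_affine: "r = (\<lambda>x. K' x - ((K' b - K' a) / h * x + (K' a * b - K' b * a) / h))"
    using \<open>0 < h\<close> unfolding r_def h_def by (auto simp: field_simps)
  have "continuous_on {a..b} K'" "Zygmund_on \<gamma> a b K'"
    using assms(4) by (auto simp: D1Z_iff C1_diffeo_on_def)
  then have "continuous_on {a..b} r" "Zygmund_on \<gamma> a b r"
    unfolding r_affine by (auto intro!: continuous_intros simp del: times_divide_eq_left)
      (rule Zygmund_on_diff_affine)
  moreover have "r a = 0" "r b = 0" using \<open>0 < h\<close> unfolding r_def h_def by simp_all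
  ultimately obtain C where "C > 0" and C: "\<And>u. 0 \<le> u \<Longrightarrow> u \<le> 1/2 \<Longrightarrow>
      \<bar>r (a + u * h)\<bar> \<le> C * Tg \<gamma> u h \<and> \<bar>r (b - u * h)\<bar> \<le> C * Tg \<gamma> u h"
    using Zygmund_on_vanishing_endpoints_bound[OF assms(3,1,2)] unfolding h_def by blast
  show ?thesis
  proof (intro exI[of _ "C / h"] conjI ballI)
    show "0 < C / h" using \<open>0 < h\<close> \<open>C > 0\<close> by simp
    fix x
    assume "x \<in> {a..b}"
    define z where "z = (b - x) / (b - a)"
    have "0 \<le> z" "z \<le> 1"
      using \<open>x \<in> {a..b}\<close> \<open>0 < h\<close> unfolding z_def h_def by (auto simp: divide_le_eq_1)
    moreover have "x = b - z * h" "x = a + (1 - z) * h"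
      using \<open>0 < h\<close> unfolding z_def h_def by (auto simp: field_simps)
    moreover have "\<bar>z * K' a + (1 - z) * K' b - K' x\<bar> = \<bar>r x\<bar>"
      unfolding r_def z_def h_def by (rule abs_minus_commute)
    moreover have "C / h * (b - a) = C" using \<open>0 < h\<close> h_def by simp
    ultimately show "let z = (b - x) / (b - a) in
      \<bar>z * K' a + (1 - z) * K' b - K' x\<bar>
        \<le> (if z \<le> 1/2 then C / h * (b - a) * Tg \<gamma> z (b - a)
            else C / h * (b - a) * Tg \<gamma> (1 - z) (b - a))"
      using C[of z] C[of "1 - z"] unfolding Let_def z_def[symmetric] h_def[symmetric] by auto
  qed
qed

end
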